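(* Let $n\ge3$, $r>0$ and let $F$ be the chord length distribution function of $\mathcal P_{n,r}$. Then $$F(s)=\Big[\Big(1-\frac{\pi}{n}\cot\frac{\pi}{n}\Big)\csc\frac{\pi}{n}+\frac{\pi}{n}\sec\frac{\pi}{n}\Big]\frac{s}{4r}$$ for $0\le s\le 2r\cos^2\frac{\pi}{2n}$ if $n=3$, and for $0\le s\le 2r\sin\frac{\pi}{n}$ if $n\ge4$.
   Context: $\mathcal P_{n,r}$ denotes the regular polygon with $n$ sides whose circumscribed circle has radius $r$ and centre at the origin, with perimeter $u=2nr\sin(\pi/n)$. Lines are $g(p,\phi)=\{x\cos\phi+y\sin\phi=p\}$, $p\ge0$, $0\le\phi<2\pi$, with the motion-invariant measure $\mu$ given by $dp\,d\phi$. For a line $g$ meeting the polygon, $|\chi(g)|$ is the length of the chord $g\cap\mathcal P_{n,r}$. The chord length distribution function is $F(s)=\frac1u\,\mu(\{g: g\cap\mathcal P_{n,r}\ne\emptyset,\ |\chi(g)|\le s\})$. *)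

theory Defs
  imports "HOL-Analysis.Analysis"
begin

text \<open>The regular n-gon inscribed in the circle of radius r centred at the origin,
  as the convex hull of its vertices (a vertex on the positive x-axis; by motion
  invariance the orientation is irrelevant).\<close>
definition reg_polygon :: "nat \<Rightarrow> real \<Rightarrow> (real \<times> real) set" where
  "reg_polygon n r = convex hull
     {(r * cos (2 * pi * real k / real n), r * sin (2 * pi * real k / real n)) | k. k < n}"

definition reg_perimeter :: "nat \<Rightarrow> real \<Rightarrow> real" where
  "reg_perimeter n r = 2 * real n * r * sin (pi / real n)"

definition gline :: "real \<Rightarrow> real \<Rightarrow> (real \<times> real) set" where
  "gline p \<phi> = {(x, y). x * cos \<phi> + y * sin \<phi> = p}"

text \<open>Length of the chord g \<inter> K (the chord is a segment, its length is its diameter).\<close>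
definition chord_length :: "(real \<times> real) set \<Rightarrow> real \<Rightarrow> real \<Rightarrow> real" where
  "chord_length K p \<phi> = diameter (gline p \<phi> \<inter> K)"

text \<open>Chord length distribution function, with the motion-invariant measure dp dphi
  on the parameter set p \<ge> 0, 0 \<le> phi < 2 pi (Lebesgue measure on the (p,phi)-plane).\<close>
definition chord_dist :: "nat \<Rightarrow> real \<Rightarrow> real \<Rightarrow> real" where
  "chord_dist n r s = measure lborel
     {(p::real, \<phi>::real). 0 \<le> p \<and> 0 \<le> \<phi> \<and> \<phi> < 2 * pi \<and>
        gline p \<phi> \<inter> reg_polygon n r \<noteq> {} \<and>
        chord_length (reg_polygon n r) p \<phi> \<le> s} / reg_perimeter n r"

end

theory Submission
  imports Defs
begin

text \<open>
  Write \<open>\<beta> = \<pi>/n\<close>. For a direction \<open>\<phi>\<close> let \<open>vert k\<close> be the vertex nearest to direction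
  \<open>\<phi>\<close>, at angular offset \<open>\<psi> \<in> (-\<beta>, \<beta>)\<close>. Near this vertex the chords of direction \<open>\<phi>\<close> are
  cut off by the two edges at \<open>vert k\<close>, so their length decreases linearly with the level p,
  with slope \<open>chord_rate = sin 2\<beta> / (sin (\<beta>-\<psi>) sin (\<beta>+\<psi>))\<close>; chords of length at most s
  therefore form a cap of width \<open>s / chord_rate\<close>, provided the cap stays above the two
  neighbouring vertices. The hypotheses on s guarantee exactly this (\<open>admissible s\<close>), and that
  in the middle range all chords are longer than s (concavity of the chord length). Hence the
  lines of direction \<open>\<phi>\<close> with chord at most s form two intervals, one at each end, of total
  length \<open>s / chord_rate\<close> for \<open>\<phi>\<close> plus the same for \<open>\<phi> + \<pi>\<close>.

  The theorem is then a closed-form evaluation.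
\<close>

section \<open>Normal and tangential coordinates\<close>

text \<open>For a direction \<open>\<phi>\<close>, \<open>ncoord \<phi> x\<close> is the coordinate of the point x along the unit
  normal \<open>(cos \<phi>, sin \<phi>)\<close> and \<open>tcoord \<phi> x\<close> the coordinate along the line direction; the
  line \<open>g(p, \<phi>)\<close> is the level set \<open>ncoord \<phi> = p\<close>, and on it distances are measured by
  \<open>tcoord \<phi>\<close>.\<close>

definition ncoord :: "real \<Rightarrow> real \<times> real \<Rightarrow> real" where
  "ncoord \<phi> x = fst x * cos \<phi> + snd x * sin \<phi>"

definition tcoord :: "real \<Rightarrow> real \<times> real \<Rightarrow> real" where
  "tcoord \<phi> x = - fst x * sin \<phi> + snd x * cos \<phi>"

lemma ncoord_inner: "ncoord \<phi> x = inner (cos \<phi>, sin \<phi>) x"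
  by (cases x) (simp add: ncoord_def)

lemma ncoord_rotate_add: "ncoord (\<phi> + \<theta>) x = ncoord \<phi> x * cos \<theta> + tcoord \<phi> x * sin \<theta>"
  by (simp add: ncoord_def tcoord_def cos_add sin_add algebra_simps)

lemma ncoord_rotate_diff: "ncoord (\<phi> - \<theta>) x = ncoord \<phi> x * cos \<theta> - tcoord \<phi> x * sin \<theta>"
  by (simp add: ncoord_def tcoord_def cos_diff sin_diff algebra_simps)

lemma ncoord_opposite: "ncoord (\<phi> + pi) x = - ncoord \<phi> x"
  by (simp add: ncoord_def)

lemma tcoord_opposite: "tcoord (\<phi> + pi) x = - tcoord \<phi> x"
  by (simp add: tcoord_def)

lemma ncoord_convex_comb: "ncoord \<phi> ((1 - u) *\<^sub>R a + u *\<^sub>R b) = (1 - u) * ncoord \<phi> a + u * ncoord \<phi> b"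
  by (simp add: ncoord_def algebra_simps)

lemma tcoord_convex_comb: "tcoord \<phi> ((1 - u) *\<^sub>R a + u *\<^sub>R b) = (1 - u) * tcoord \<phi> a + u * tcoord \<phi> b"
  by (simp add: tcoord_def algebra_simps)

lemma dist_on_line:
  assumes "ncoord \<phi> x = ncoord \<phi> y"
  shows "dist x y = \<bar>tcoord \<phi> x - tcoord \<phi> y\<bar>"
proof -
  have "(ncoord \<phi> x - ncoord \<phi> y)^2 + (tcoord \<phi> x - tcoord \<phi> y)^2
      = ((fst x - fst y)^2 + (snd x - snd y)^2) * ((sin \<phi>)^2 + (cos \<phi>)^2)"
    unfolding ncoord_def tcoord_def power2_eq_square by algebra
  then have "dist x y = sqrt ((ncoord \<phi> x - ncoord \<phi> y)^2 + (tcoord \<phi> x - tcoord \<phi> y)^2)"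
    by (simp add: dist_Pair_Pair[of "fst x" "snd x" "fst y" "snd y", simplified] dist_real_def)
  with assms show ?thesis by simp
qed

lemma level_point_on_segment:
  assumes "ncoord \<phi> b \<le> p" "p \<le> ncoord \<phi> a"
  shows "\<exists>x \<in> closed_segment a b. ncoord \<phi> x = p"
  unfolding ncoord_inner
  by (rule connected_ivt_hyperplane[of _ b a]) (use assms in \<open>auto simp: ncoord_inner\<close>)

lemma ncoord_on_segment:
  assumes "x \<in> closed_segment a b" "ncoord \<phi> a = c" "ncoord \<phi> b = c"
  shows "ncoord \<phi> x = c"
proof -
  obtain u where "x = (1 - u) *\<^sub>R a + u *\<^sub>R b" using assms(1) unfolding in_segment by blast
  then have "ncoord \<phi> x = (1 - u) * ncoord \<phi> a + u * ncoord \<phi> b" by (simp only: ncoord_convex_comb)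
  then show ?thesis using assms(2,3) by (simp add: algebra_simps)
qed

lemma gline_ncoord: "gline p \<phi> = {x. ncoord \<phi> x = p}"
  by (auto simp: gline_def ncoord_def)

lemma gline_opposite: "gline p (\<phi> + pi) = gline (-p) \<phi>"
  by (auto simp: gline_ncoord ncoord_opposite)

lemma gline_2pi: "gline p (\<phi> + 2*pi) = gline p \<phi>"
  by (auto simp: gline_def)

lemma chord_length_2pi: "chord_length K p (\<phi> + 2*pi) = chord_length K p \<phi>"
  by (simp add: chord_length_def gline_2pi)

lemma chord_length_opposite: "chord_length K p (\<phi> + pi) = chord_length K (-p) \<phi>"
  by (simp add: chord_length_def gline_opposite)

lemma dist_le_chord_length:
  assumes "bounded K" "x \<in> K" "y \<in> K" "ncoord \<phi> x = p" "ncoord \<phi> y = p"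
  shows "dist x y \<le> chord_length K p \<phi>"
  unfolding chord_length_def
  by (rule diameter_bounded_bound) (use assms in \<open>auto intro: bounded_subset simp: gline_ncoord\<close>)

lemma chord_length_le:
  assumes "gline p \<phi> \<inter> K \<noteq> {}"
    and "\<And>x. x \<in> K \<Longrightarrow> ncoord \<phi> x = p \<Longrightarrow> lo \<le> tcoord \<phi> x \<and> tcoord \<phi> x \<le> hi"
  shows "chord_length K p \<phi> \<le> hi - lo"
  unfolding chord_length_def
proof (rule diameter_le)
  show "gline p \<phi> \<inter> K \<noteq> {} \<or> 0 \<le> hi - lo" using assms(1) by simp
  fix y z assume "y \<in> gline p \<phi> \<inter> K" "z \<in> gline p \<phi> \<inter> K"
  then have y: "y \<in> K" "ncoord \<phi> y = p" and z: "z \<in> K" "ncoord \<phi> z = p" by (auto simp: gline_ncoord)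
  have "norm (y - z) = \<bar>tcoord \<phi> y - tcoord \<phi> z\<bar>"
    using dist_on_line[of \<phi> y z] y z by (simp add: dist_norm)
  also have "\<dots> \<le> hi - lo" using assms(2)[OF y] assms(2)[OF z] by linarith
  finally show "norm (y - z) \<le> hi - lo" .
qed

text \<open>Concavity of the chord length of a convex set in a fixed direction: interpolating two
  pairs of points on parallel lines gives a pair on the interpolated line whose tangential
  separation is the interpolated separation.\<close>
lemma chord_length_interpolate:
  fixes K :: "(real \<times> real) set"
  assumes "convex K" "bounded K"
    and "x1 \<in> K" "y1 \<in> K" "ncoord \<phi> x1 = p1" "ncoord \<phi> y1 = p1"
    and "x2 \<in> K" "y2 \<in> K" "ncoord \<phi> x2 = p2" "ncoord \<phi> y2 = p2"
    and "0 \<le> u" "u \<le> 1"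
  shows "\<bar>(1 - u) * (tcoord \<phi> y1 - tcoord \<phi> x1) + u * (tcoord \<phi> y2 - tcoord \<phi> x2)\<bar>
    \<le> chord_length K ((1 - u) * p1 + u * p2) \<phi>"
proof -
  define z1 where "z1 = (1 - u) *\<^sub>R x1 + u *\<^sub>R x2"
  define z2 where "z2 = (1 - u) *\<^sub>R y1 + u *\<^sub>R y2"
  have K: "z1 \<in> K" "z2 \<in> K" unfolding z1_def z2_def using assms by (auto intro: convexD)
  have lvl: "ncoord \<phi> z1 = (1 - u) * p1 + u * p2" "ncoord \<phi> z2 = (1 - u) * p1 + u * p2"
    unfolding z1_def z2_def ncoord_convex_comb using assms by simp_all
  have "dist z1 z2 \<le> chord_length K ((1 - u) * p1 + u * p2) \<phi>"
    by (rule dist_le_chord_length[OF assms(2) K lvl])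
  moreover have "dist z1 z2 = \<bar>tcoord \<phi> z1 - tcoord \<phi> z2\<bar>" using dist_on_line lvl by simp
  ultimately show ?thesis unfolding z1_def z2_def tcoord_convex_comb by (simp add: algebra_simps)
qed

section \<open>Measurability of the set of lines with short chords\<close>

definition short_lines :: "(real \<times> real) set \<Rightarrow> real \<Rightarrow> (real \<times> real) set" where
  "short_lines K s = {(p, \<phi>). gline p \<phi> \<inter> K \<noteq> {} \<and> chord_length K p \<phi> \<le> s}"

lemma chord_length_le_iff:
  assumes "bounded K" "0 \<le> s"
  shows "chord_length K p \<phi> \<le> s \<longleftrightarrow>
    (\<forall>x\<in>K. \<forall>y\<in>K. ncoord \<phi> x = p \<longrightarrow> ncoord \<phi> y = p \<longrightarrow> dist x y \<le> s)"
proof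
  assume short: "chord_length K p \<phi> \<le> s"
  show "\<forall>x\<in>K. \<forall>y\<in>K. ncoord \<phi> x = p \<longrightarrow> ncoord \<phi> y = p \<longrightarrow> dist x y \<le> s"
  proof (intro ballI impI)
    fix x y assume "x \<in> K" "y \<in> K" "ncoord \<phi> x = p" "ncoord \<phi> y = p"
    then have "dist x y \<le> chord_length K p \<phi>" by (rule dist_le_chord_length[OF assms(1)])
    with short show "dist x y \<le> s" by linarith
  qed
next
  assume pairs: "\<forall>x\<in>K. \<forall>y\<in>K. ncoord \<phi> x = p \<longrightarrow> ncoord \<phi> y = p \<longrightarrow> dist x y \<le> s"
  show "chord_length K p \<phi> \<le> s"
    unfolding chord_length_def
  proof (rule diameter_le)
    fix x y assume "x \<in> gline p \<phi> \<inter> K" "y \<in> gline p \<phi> \<inter> K"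
    then show "norm (x - y) \<le> s" using pairs by (simp add: gline_ncoord dist_norm)
  qed (use assms in simp)
qed

text \<open>A non-strict bound as a countable family of strict ones, used to express short chords
  through closed sets.\<close>
lemma le_iff_less_all_inverse: "(a::real) \<le> s \<longleftrightarrow> (\<forall>m::nat. a < s + 1 / Suc m)"
proof
  assume "a \<le> s"
  show "\<forall>m::nat. a < s + 1 / Suc m"
  proof
    fix m :: nat
    have "0 < 1 / real (Suc m)" by simp
    with \<open>a \<le> s\<close> show "a < s + 1 / Suc m" by linarith
  qed
next
  assume all: "\<forall>m::nat. a < s + 1 / Suc m"
  show "a \<le> s"
  proof (rule ccontr)
    assume "\<not> a \<le> s"
    then have "0 < a - s" by simp
    then obtain m where "inverse (real (Suc m)) < a - s" by (rule reals_Archimedean[elim_format]) blast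
    moreover have "a < s + inverse (real (Suc m))" using all by (simp add: inverse_eq_divide)
    ultimately show False by linarith
  qed
qed

text \<open>For compact K, the lines meeting K and the lines meeting K in two points at distance at
  least e are closed sets of parameters (projections of closed sets along a compact factor).\<close>
lemma closed_meeting_lines:
  assumes "compact K"
  shows "closed {(p, \<phi>). \<exists>x\<in>K. ncoord \<phi> x = p}"
proof -
  have "closed {y. \<exists>x. x \<in> K \<and> (x, y) \<in> {z. ncoord (snd (snd z)) (fst z) = fst (snd z)}}"
    unfolding ncoord_def
    by (intro closed_compact_projection assms closed_Collect_eq continuous_intros)
  then show ?thesis by (simp add: case_prod_beta' Bex_def)
qed

lemma closed_wide_lines:
  assumes "compact K"
  shows "closed {(p, \<phi>). \<exists>x\<in>K. \<exists>y\<in>K. ncoord \<phi> x = p \<and> ncoord \<phi> y = p \<and> e \<le> dist x y}"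
proof -
  have "closed {y. \<exists>x. x \<in> K \<times> K \<and> (x, y) \<in>
      {z. ncoord (snd (snd z)) (fst (fst z)) = fst (snd z)} \<inter>
      {z. ncoord (snd (snd z)) (snd (fst z)) = fst (snd z)} \<inter> {z. e \<le> dist (fst (fst z)) (snd (fst z))}}"
    unfolding ncoord_def
    by (intro closed_compact_projection compact_Times assms closed_Int closed_Collect_eq
        closed_Collect_le continuous_intros)
  then show ?thesis by (rule back_subst[of closed]) (auto simp: case_prod_beta')
qed

lemma short_lines_borel:
  assumes "compact K" "0 \<le> s"
  shows "short_lines K s \<in> sets borel"
proof -
  have "short_lines K s = {(p, \<phi>). \<exists>x\<in>K. ncoord \<phi> x = p} \<inter>
    (\<Inter>m::nat. - {(p, \<phi>). \<exists>x\<in>K. \<exists>y\<in>K. ncoord \<phi> x = p \<and> ncoord \<phi> y = p \<and> s + 1 / Suc m \<le> dist x y})"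
    (is "_ = ?R")
  proof (intro set_eqI)
    fix z :: "real \<times> real"
    obtain p \<phi> where z: "z = (p, \<phi>)" by fastforce
    show "z \<in> short_lines K s \<longleftrightarrow> z \<in> ?R"
      unfolding z short_lines_def chord_length_le_iff[OF compact_imp_bounded[OF assms(1)] assms(2)]
        le_iff_less_all_inverse[of "dist _ _"]
      by (simp add: gline_ncoord not_le) blast
  qed
  also have "\<dots> \<in> sets borel"
    using closed_meeting_lines[OF assms(1)] closed_wide_lines[OF assms(1)]
    by (intro sets.Int borel_closed sets.countable_INT' borel_comp) auto
  finally show ?thesis .
qed

lemma cos_plus_2pi_multiple: "cos (x + of_int m * (2*pi)) = cos (x::real)"
  using cos.plus_of_int[of x m] by simp

lemma sin_plus_2pi_multiple: "sin (x + of_int m * (2*pi)) = sin (x::real)"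
  using sin.plus_of_int[of x m] by simp

lemma cos_diff_minus_cos_add: "cos (a - b) - cos (a + b) = 2 * sin a * sin (b::real)"
  by (simp add: cos_add cos_diff)

lemma sin_diff_mult_sin_add: "sin (a - x) * sin (a + x) = (cos (2*x) - cos (2*a)) / (2::real)"
proof -
  have "sin (a - x) * sin (a + x) = (sin a)^2 * (cos x)^2 - (cos a)^2 * (sin x)^2"
    unfolding sin_add sin_diff power2_eq_square by algebra
  also have "\<dots> = (sin a)^2 - (sin x)^2" by (simp add: cos_squared_eq algebra_simps)
  also have "\<dots> = (cos (2*x) - cos (2*a)) / 2" by (simp add: cos_double_sin)
  finally show ?thesis .
qed

section \<open>Measures and integrals on the real line\<close>

lemma emeasure_lborel_reflect:
  assumes "A \<in> sets borel"
  shows "emeasure lborel (uminus -` A) = emeasure lborel (A :: real set)"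
proof -
  have "emeasure lborel A = emeasure (distr lborel borel uminus) A" by (simp add: lborel_distr_uminus)
  also have "\<dots> = emeasure lborel (uminus -` A \<inter> space lborel)" using assms by (intro emeasure_distr) auto
  finally show ?thesis by simp
qed

lemma nn_integral_translate:
  fixes f :: "real \<Rightarrow> ennreal"
  assumes "f \<in> borel_measurable borel"
  shows "(\<integral>\<^sup>+x. f x \<partial>lborel) = (\<integral>\<^sup>+x. f (c + x) \<partial>lborel)"
  using nn_integral_real_affine[of f 1 c] assms by simp

lemma emeasure_two_intervals:
  fixes a b c d :: real
  assumes "0 \<le> b" "0 \<le> d" "a + b \<le> c"
  shows "emeasure lborel ({a .. a + b} \<union> {c .. c + d}) = ennreal (b + d)"
proof -
  have "emeasure lborel ({a .. a + b} \<union> {c .. c + d}) = emeasure lborel (({a .. a + b} \<union> {c <.. c + d}) \<union> {c})"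
    using assms by (intro arg_cong[where f="emeasure lborel"]) auto
  also have "\<dots> = emeasure lborel ({a .. a + b} \<union> {c <.. c + d})"
    by (rule emeasure_Un_null_set) auto
  also have "\<dots> = emeasure lborel {a .. a + b} + emeasure lborel {c <.. c + d}"
    using assms by (intro plus_emeasure[symmetric]) auto
  also have "\<dots> = ennreal (b + d)" using assms by (simp add: ennreal_plus)
  finally show ?thesis .
qed

lemma nn_integral_periodic_shift:
  fixes g :: "real \<Rightarrow> ennreal"
  assumes g[measurable]: "g \<in> borel_measurable borel" and per: "\<And>x. g (x + P) = g x"
    and c: "0 \<le> c" "c \<le> P"
  shows "(\<integral>\<^sup>+x. indicator {0..<P} x * g (x + c) \<partial>lborel) = (\<integral>\<^sup>+x. indicator {0..<P} x * g x \<partial>lborel)"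
proof -
  have "(\<integral>\<^sup>+x. indicator {0..<P} x * g (x + c) \<partial>lborel) = (\<integral>\<^sup>+y. indicator {c..<P+c} y * g y \<partial>lborel)"
    by (subst nn_integral_translate[of _ c]) (auto intro!: nn_integral_cong simp: indicator_def add.commute)
  also have "\<dots> = (\<integral>\<^sup>+y. indicator {c..<P} y * g y + indicator {P..<P+c} y * g y \<partial>lborel)"
    using c by (intro nn_integral_cong) (auto simp: indicator_def)
  also have "\<dots> = (\<integral>\<^sup>+y. indicator {c..<P} y * g y \<partial>lborel) + (\<integral>\<^sup>+y. indicator {P..<P+c} y * g y \<partial>lborel)"
    by (intro nn_integral_add) auto
  also have "(\<integral>\<^sup>+y. indicator {P..<P+c} y * g y \<partial>lborel) = (\<integral>\<^sup>+y. indicator {0..<c} y * g y \<partial>lborel)"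
    by (subst nn_integral_translate[of _ P]) (auto intro!: nn_integral_cong simp: indicator_def per add.commute)
  also have "(\<integral>\<^sup>+y. indicator {c..<P} y * g y \<partial>lborel) + (\<integral>\<^sup>+y. indicator {0..<c} y * g y \<partial>lborel)
      = (\<integral>\<^sup>+y. indicator {c..<P} y * g y + indicator {0..<c} y * g y \<partial>lborel)"
    by (intro nn_integral_add[symmetric]) auto
  also have "\<dots> = (\<integral>\<^sup>+y. indicator {0..<P} y * g y \<partial>lborel)"
    using c by (intro nn_integral_cong) (auto simp: indicator_def)
  finally show ?thesis .
qed

lemma nn_integral_periodic_symmetrize:
  fixes f g :: "real \<Rightarrow> ennreal"
  assumes [measurable]: "f \<in> borel_measurable borel" "g \<in> borel_measurable borel"
    and per: "\<And>x. f (x + P) = f x" "\<And>x. g (x + P) = g x" and c: "0 \<le> c" "c \<le> P"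
    and sym: "AE x in lborel. f x + f (x + c) = g x + g (x + c)"
  shows "(\<integral>\<^sup>+x. indicator {0..<P} x * f x \<partial>lborel) = (\<integral>\<^sup>+x. indicator {0..<P} x * g x \<partial>lborel)"
    (is "?F = ?G")
proof -
  have "?F + ?F = ?F + (\<integral>\<^sup>+x. indicator {0..<P} x * f (x + c) \<partial>lborel)"
    using nn_integral_periodic_shift[of f P c] per c by simp
  also have "\<dots> = (\<integral>\<^sup>+x. indicator {0..<P} x * (f x + f (x + c)) \<partial>lborel)"
    unfolding distrib_left by (rule nn_integral_add[symmetric]) measurable
  also have "\<dots> = (\<integral>\<^sup>+x. indicator {0..<P} x * (g x + g (x + c)) \<partial>lborel)"
    using sym by (intro nn_integral_cong_AE) auto
  also have "\<dots> = ?G + (\<integral>\<^sup>+x. indicator {0..<P} x * g (x + c) \<partial>lborel)"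
    unfolding distrib_left by (rule nn_integral_add) measurable
  also have "\<dots> = ?G + ?G"
    using nn_integral_periodic_shift[of g P c] per c by simp
  finally have "2 * ?F = 2 * ?G" by (simp only: mult_2)
  then show ?thesis by (simp add: ennreal_mult_cancel_left)
qed

lemma nn_integral_periods:
  fixes g :: "real \<Rightarrow> ennreal"
  assumes g[measurable]: "g \<in> borel_measurable borel" and per: "\<And>x. g (x + d) = g x" and d: "0 \<le> d"
  shows "(\<integral>\<^sup>+x. indicator {a..<a + real m * d} x * g x \<partial>lborel)
    = of_nat m * (\<integral>\<^sup>+x. indicator {a..<a + d} x * g x \<partial>lborel)"
proof (induction m)
  case 0
  then show ?case by simp
next
  case (Suc m)
  have lo: "a \<le> x" if "a + real m * d \<le> x" for x using d that by (smt (verit) of_nat_0_le_iff mult_nonneg_nonneg)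
  have per_m: "g (x + real m * d) = g x" for x
    by (induction m arbitrary: x) (simp_all add: algebra_simps per flip: add.assoc)
  have "(\<integral>\<^sup>+x. indicator {a..<a + real (Suc m) * d} x * g x \<partial>lborel)
      = (\<integral>\<^sup>+x. indicator {a..<a + real m * d} x * g x
          + indicator {a + real m * d..<a + real m * d + d} x * g x \<partial>lborel)"
    by (intro nn_integral_cong) (use d lo in \<open>auto simp: indicator_def algebra_simps\<close>)
  also have "\<dots> = (\<integral>\<^sup>+x. indicator {a..<a + real m * d} x * g x \<partial>lborel)
      + (\<integral>\<^sup>+x. indicator {a + real m * d..<a + real m * d + d} x * g x \<partial>lborel)"
    by (intro nn_integral_add) auto
  also have "(\<integral>\<^sup>+x. indicator {a + real m * d..<a + real m * d + d} x * g x \<partial>lborel)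
      = (\<integral>\<^sup>+x. indicator {a..<a + d} x * g x \<partial>lborel)"
    by (subst nn_integral_translate[of _ "real m * d"])
      (auto intro!: nn_integral_cong simp: indicator_def per_m add.commute)
  finally show ?case unfolding Suc.IH by (simp add: algebra_simps)
qed

section \<open>The regular polygon and its edge half-planes\<close>

locale regular_polygon =
  fixes n :: nat and r :: real
  assumes n_ge_3: "3 \<le> n" and r_pos: "0 < r"
begin

text \<open>\<open>\<beta> = \<pi>/n\<close> is half the central angle; the vertices \<open>vert j\<close> are indexed by all integers,
  periodically with period n.\<close>
definition \<beta> :: real where "\<beta> = pi / real n"

definition vert :: "int \<Rightarrow> real \<times> real" where
  "vert j = (r * cos (2*\<beta>* of_int j), r * sin (2*\<beta>* of_int j))"

abbreviation K :: "(real \<times> real) set" where "K \<equiv> reg_polygon n r"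

definition apothem :: real where "apothem = r * cos \<beta>"

lemma n_pos: "real n > 0" using n_ge_3 by simp
lemma n_times_\<beta>: "real n * \<beta> = pi" using n_pos by (simp add: \<beta>_def)
lemma \<beta>_pos: "0 < \<beta>" using n_pos by (simp add: \<beta>_def)
lemma \<beta>_le: "\<beta> \<le> pi / 3"
  using n_ge_3 n_pos unfolding \<beta>_def by (simp add: field_simps)

lemma sin_pos_below_2\<beta>: "0 < x \<Longrightarrow> x < 2 * \<beta> \<Longrightarrow> 0 < sin x"
  using \<beta>_le pi_gt3 by (intro sin_gt_zero) auto

lemma sin_2\<beta>_pos: "0 < sin (2*\<beta>)" using \<beta>_pos \<beta>_le pi_gt3 by (intro sin_gt_zero) auto
lemma sin_\<beta>_pos: "0 < sin \<beta>" using \<beta>_pos by (intro sin_pos_below_2\<beta>) auto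
lemma cos_\<beta>_pos: "0 < cos \<beta>" using \<beta>_pos \<beta>_le pi_gt3 by (intro cos_gt_zero_pi) auto

lemma ncoord_vert: "ncoord \<phi> (vert j) = r * cos (2*\<beta>* of_int j - \<phi>)"
  by (simp add: ncoord_def vert_def cos_diff algebra_simps)

lemma vert_periodic: "vert (j + int n * m) = vert j"
proof -
  have "2*\<beta>* of_int (j + int n * m) = 2*\<beta>* of_int j + of_int m * (2*pi)"
    using n_times_\<beta> by (simp add: algebra_simps)
  then show ?thesis unfolding vert_def by (simp add: cos_plus_2pi_multiple sin_plus_2pi_multiple)
qed

lemma range_vert: "range vert = vert ` {0..<int n}"
proof (intro set_eqI iffI)
  fix x assume "x \<in> range vert"
  then obtain j where x: "x = vert j" by auto
  have "x = vert (j mod int n)" using vert_periodic[of "j mod int n" "j div int n"] x by simp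
  moreover have "j mod int n \<in> {0..<int n}" using n_pos by simp
  ultimately show "x \<in> vert ` {0..<int n}" by blast
qed auto

lemma K_eq: "K = convex hull (range vert)"
proof -
  have "{(r * cos (2 * pi * real k / real n), r * sin (2 * pi * real k / real n)) | k. k < n}
      = (\<lambda>k. vert (int k)) ` {..<n}"
    by (auto simp: vert_def \<beta>_def)
  also have "\<dots> = vert ` {0..<int n}"
  proof -
    have "int ` {..<n} = {0..<int n}" by (auto simp: image_iff intro!: bexI[of _ "nat _"])
    then show ?thesis by (simp add: image_image[symmetric, of vert int])
  qed
  finally show ?thesis by (simp add: reg_polygon_def range_vert)
qed

lemma convex_K: "convex K" by (simp add: K_eq)
lemma vert_in_K: "vert j \<in> K" by (simp add: K_eq hull_inc)
lemma compact_K: "compact K" by (simp add: K_eq range_vert compact_convex_hull finite_imp_compact)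
lemma bounded_K: "bounded K" using compact_K compact_imp_bounded by blast

text \<open>Odd multiples of \<open>\<beta>\<close> point to edge midpoints; the nearest one to a vertex direction is at
  angle \<open>\<beta>\<close>, so the cosine of any odd multiple is at most \<open>cos \<beta>\<close>.\<close>
lemma cos_odd_multiple_le: "cos (of_int (2*m+1) * \<beta>) \<le> cos \<beta>"
proof -
  define q where "q = (2*m+1) mod (2 * int n)"
  define d where "d = (2*m+1) div (2 * int n)"
  have qd: "2*m+1 = q + 2 * int n * d" by (simp add: q_def d_def)
  have q0: "0 \<le> q" "q < 2 * int n" using n_pos by (simp_all add: q_def)
  have "q \<noteq> 0"
  proof
    assume "q = 0"
    then have "2*m+1 = 2 * (int n * d)" using qd by simp
    then show False by presburger
  qed
  with q0 have q1: "1 \<le> q" by simp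
  have "of_int (2*m+1) * \<beta> = of_int q * \<beta> + of_int d * (2*pi)"
    using qd n_times_\<beta> by (simp add: algebra_simps)
  then have c: "cos (of_int (2*m+1) * \<beta>) = cos (of_int q * \<beta>)"
    by (simp add: cos_plus_2pi_multiple)
  have reduce: "cos (of_int j * \<beta>) \<le> cos \<beta>" if "1 \<le> j" "j \<le> int n" for j
  proof -
    have "real_of_int j * \<beta> \<le> real n * \<beta>"
      using that \<beta>_pos by (intro mult_right_mono) auto
    then show ?thesis using that \<beta>_pos \<beta>_le pi_gt3 n_times_\<beta>
      by (subst cos_mono_le_eq) auto
  qed
  show ?thesis
  proof (cases "q \<le> int n")
    case True
    then show ?thesis unfolding c using reduce q1 by blast
  next
    case False
    have "cos (of_int q * \<beta>) = cos (2*pi - of_int q * \<beta>)" by (simp add: cos_diff)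
    also have "2*pi - of_int q * \<beta> = of_int (2 * int n - q) * \<beta>"
      using n_times_\<beta> by (simp add: algebra_simps)
    finally show ?thesis unfolding c using reduce[of "2 * int n - q"] q0 False by simp
  qed
qed

text \<open>Every edge of the polygon lies on the line at distance \<open>apothem\<close> in a direction
  \<open>(2j+1)\<beta>\<close>, and K lies in the corresponding half-plane.\<close>
lemma edge_halfplane:
  assumes "x \<in> K" shows "ncoord (of_int (2*j+1) * \<beta>) x \<le> apothem"
proof -
  define \<omega> where "\<omega> = of_int (2*j+1) * \<beta>"
  have "K \<subseteq> {y. inner (cos \<omega>, sin \<omega>) y \<le> apothem}"
    unfolding K_eq
  proof (rule hull_minimal)
    have "ncoord \<omega> (vert i) \<le> apothem" for i
    proof -
      have "ncoord \<omega> (vert i) = r * cos (of_int (2*(i-j-1)+1) * \<beta>)"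
        unfolding ncoord_vert \<omega>_def by (simp add: algebra_simps)
      also have "\<dots> \<le> r * cos \<beta>" using cos_odd_multiple_le[of "i-j-1"] r_pos by simp
      finally show ?thesis unfolding apothem_def .
    qed
    then show "range vert \<subseteq> {y. inner (cos \<omega>, sin \<omega>) y \<le> apothem}"
      by (auto simp: ncoord_inner)
  qed (rule convex_halfspace_le)
  then show ?thesis using assms unfolding \<omega>_def[symmetric] by (auto simp: ncoord_inner)
qed

section \<open>Chords near a vertex\<close>

text \<open>When
  \<open>\<bar>offset \<phi> k\<bar> < \<beta>\<close>, \<open>vert k\<close> is the point of K farthest in direction \<open>\<phi>\<close>, at
  level \<open>support \<phi> k\<close>, and on a line \<open>g(p, \<phi>)\<close> the two edges at \<open>vert k\<close> cut off the
  tangential interval \<open>[tng_min \<phi> k p, tng_max \<phi> k p]\<close>, whose length decreases linearly in p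
  with slope \<open>chord_rate \<phi> k\<close>.\<close>

definition offset :: "real \<Rightarrow> int \<Rightarrow> real" where
  "offset \<phi> k = \<phi> - 2 * \<beta> * of_int k"

definition support :: "real \<Rightarrow> int \<Rightarrow> real" where
  "support \<phi> k = r * cos (offset \<phi> k)"

definition tng_max :: "real \<Rightarrow> int \<Rightarrow> real \<Rightarrow> real" where
  "tng_max \<phi> k p = (apothem - p * cos (\<beta> - offset \<phi> k)) / sin (\<beta> - offset \<phi> k)"

definition tng_min :: "real \<Rightarrow> int \<Rightarrow> real \<Rightarrow> real" where
  "tng_min \<phi> k p = (p * cos (\<beta> + offset \<phi> k) - apothem) / sin (\<beta> + offset \<phi> k)"

definition chord_rate :: "real \<Rightarrow> int \<Rightarrow> real" where
  "chord_rate \<phi> k = sin (2*\<beta>) / (sin (\<beta> - offset \<phi> k) * sin (\<beta> + offset \<phi> k))"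

lemma ncoord_edge_vertices:
  "ncoord (of_int (2*j+1) * \<beta>) (vert j) = apothem"
  "ncoord (of_int (2*j+1) * \<beta>) (vert (j+1)) = apothem"
proof -
  have "2 * \<beta> * of_int j - of_int (2*j+1) * \<beta> = - \<beta>"
    "2 * \<beta> * of_int (j+1) - of_int (2*j+1) * \<beta> = \<beta>" by (simp_all add: algebra_simps)
  then show "ncoord (of_int (2*j+1) * \<beta>) (vert j) = apothem"
    "ncoord (of_int (2*j+1) * \<beta>) (vert (j+1)) = apothem"
    by (simp_all add: ncoord_vert apothem_def)
qed

context
  fixes \<phi> :: real and k :: int
  assumes nearest: "\<bar>offset \<phi> k\<bar> < \<beta>"
begin

lemma sin_right_pos: "0 < sin (\<beta> - offset \<phi> k)" using nearest by (intro sin_pos_below_2\<beta>) auto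
lemma sin_left_pos: "0 < sin (\<beta> + offset \<phi> k)" using nearest by (intro sin_pos_below_2\<beta>) auto

lemma chord_rate_pos: "0 < chord_rate \<phi> k"
  using sin_right_pos sin_left_pos sin_2\<beta>_pos by (simp add: chord_rate_def)

lemma support_pos: "0 < support \<phi> k"
proof -
  have "cos (offset \<phi> k) > 0" using nearest \<beta>_le pi_gt3 by (intro cos_gt_zero_pi) auto
  then show ?thesis using r_pos by (simp add: support_def)
qed

lemma right_edge_slack:
  assumes "ncoord \<phi> x = p"
  shows "apothem - ncoord (of_int (2*k+1) * \<beta>) x
    = sin (\<beta> - offset \<phi> k) * (tng_max \<phi> k p - tcoord \<phi> x)"
proof -
  have dir: "of_int (2*k+1) * \<beta> = \<phi> + (\<beta> - offset \<phi> k)" by (simp add: offset_def algebra_simps)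
  show ?thesis
    using sin_right_pos unfolding dir ncoord_rotate_add assms tng_max_def by (simp add: field_simps)
qed

lemma left_edge_slack:
  assumes "ncoord \<phi> x = p"
  shows "apothem - ncoord (of_int (2*(k-1)+1) * \<beta>) x
    = sin (\<beta> + offset \<phi> k) * (tcoord \<phi> x - tng_min \<phi> k p)"
proof -
  have dir: "of_int (2*(k-1)+1) * \<beta> = \<phi> - (\<beta> + offset \<phi> k)" by (simp add: offset_def algebra_simps)
  show ?thesis
    using sin_left_pos unfolding dir ncoord_rotate_diff assms tng_min_def by (simp add: field_simps)
qed

lemma tcoord_bounds:
  assumes "x \<in> K" "ncoord \<phi> x = p"
  shows "tng_min \<phi> k p \<le> tcoord \<phi> x \<and> tcoord \<phi> x \<le> tng_max \<phi> k p"
  using right_edge_slack[OF assms(2)] left_edge_slack[OF assms(2)] sin_right_pos sin_left_pos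
    edge_halfplane[OF assms(1), of k] edge_halfplane[OF assms(1), of "k-1"]
  by (smt (verit) mult_pos_neg)

lemma tng_range: "tng_max \<phi> k p - tng_min \<phi> k p = (support \<phi> k - p) * chord_rate \<phi> k"
proof -
  define A where "A = \<beta> - offset \<phi> k"
  define B where "B = \<beta> + offset \<phi> k"
  have \<beta>AB: "\<beta> = (A + B) / 2" and offAB: "offset \<phi> k = (B - A) / 2" by (simp_all add: A_def B_def)
  have sAB: "sin A > 0" "sin B > 0" using sin_right_pos sin_left_pos by (simp_all add: A_def B_def)
  have key: "cos ((A+B)/2) * (sin A + sin B) = cos ((B-A)/2) * sin (A + B)"
  proof -
    have "sin A + sin B = 2 * sin ((A+B)/2) * cos ((A-B)/2)" by (rule sin_plus_sin)
    moreover have "sin (A+B) = 2 * sin ((A+B)/2) * cos ((A+B)/2)"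
    proof -
      have "2 * ((A+B)/2) = A + B" by simp
      then show ?thesis using sin_double[of "(A+B)/2"] by metis
    qed
    moreover have "cos ((A-B)/2) = cos ((B-A)/2)" by (metis cos_minus minus_diff_eq diff_divide_distrib)
    ultimately show ?thesis by simp
  qed
  have "tng_max \<phi> k p - tng_min \<phi> k p
      = ((apothem - p * cos A) * sin B + (apothem - p * cos B) * sin A) / (sin A * sin B)"
    unfolding tng_max_def tng_min_def A_def[symmetric] B_def[symmetric] using sAB
    by (simp add: field_simps)
  also have "(apothem - p * cos A) * sin B + (apothem - p * cos B) * sin A
      = apothem * (sin A + sin B) - p * sin (A + B)"
    by (simp add: sin_add algebra_simps)
  also have "\<dots> = (support \<phi> k - p) * sin (A + B)"
    using key unfolding apothem_def support_def \<beta>AB offAB[symmetric] by (simp add: algebra_simps)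
  finally show ?thesis unfolding chord_rate_def A_def B_def by (simp add: algebra_simps)
qed

lemma ncoord_le_support:
  assumes "x \<in> K" shows "ncoord \<phi> x \<le> support \<phi> k"
proof -
  have "0 \<le> (support \<phi> k - ncoord \<phi> x) * chord_rate \<phi> k"
    using tcoord_bounds[OF assms refl] tng_range[of "ncoord \<phi> x"] by linarith
  then show ?thesis using chord_rate_pos by (simp add: zero_le_mult_iff)
qed

lemma chord_length_cap_le:
  assumes "gline p \<phi> \<inter> K \<noteq> {}"
  shows "chord_length K p \<phi> \<le> (support \<phi> k - p) * chord_rate \<phi> k"
  using chord_length_le[OF assms tcoord_bounds] tng_range by simp

lemma ncoord_vert_nearest: "ncoord \<phi> (vert k) = support \<phi> k"
proof -
  have "2 * \<beta> * of_int k - \<phi> = - offset \<phi> k" by (simp add: offset_def)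
  then show ?thesis by (simp only: ncoord_vert support_def cos_minus)
qed

lemma ncoord_vert_succ: "ncoord \<phi> (vert (k+1)) = r * cos (2*\<beta> - offset \<phi> k)"
  by (simp add: ncoord_vert offset_def algebra_simps)

lemma ncoord_vert_pred: "ncoord \<phi> (vert (k-1)) = r * cos (2*\<beta> + offset \<phi> k)"
proof -
  have "2 * \<beta> * of_int (k-1) - \<phi> = - (2*\<beta> + offset \<phi> k)" by (simp add: offset_def algebra_simps)
  then show ?thesis by (simp only: ncoord_vert cos_minus)
qed

lemma vert_succ_below: "ncoord \<phi> (vert (k+1)) < support \<phi> k"
proof -
  have "cos (2*\<beta> - offset \<phi> k) < cos \<bar>offset \<phi> k\<bar>"
    using nearest \<beta>_le pi_gt3 by (subst cos_mono_less_eq) auto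
  then show ?thesis using r_pos by (simp add: ncoord_vert_succ support_def)
qed

lemma vert_pred_below: "ncoord \<phi> (vert (k-1)) < support \<phi> k"
proof -
  have "cos (2*\<beta> + offset \<phi> k) < cos \<bar>offset \<phi> k\<bar>"
    using nearest \<beta>_le pi_gt3 by (subst cos_mono_less_eq) auto
  then show ?thesis using r_pos by (simp add: ncoord_vert_pred support_def)
qed

lemma cap_endpoints:
  assumes "ncoord \<phi> (vert (k+1)) \<le> p" "ncoord \<phi> (vert (k-1)) \<le> p" "p \<le> support \<phi> k"
  obtains x y where "x \<in> K" "y \<in> K" "ncoord \<phi> x = p" "ncoord \<phi> y = p"
    "tcoord \<phi> x = tng_max \<phi> k p" "tcoord \<phi> y = tng_min \<phi> k p"
proof -
  obtain x where x: "x \<in> closed_segment (vert k) (vert (k+1))" "ncoord \<phi> x = p"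
    using level_point_on_segment[of \<phi> "vert (k+1)" p "vert k"] assms ncoord_vert_nearest by auto
  obtain y where y: "y \<in> closed_segment (vert (k-1)) (vert k)" "ncoord \<phi> y = p"
    using level_point_on_segment[of \<phi> "vert (k-1)" p "vert k"] assms ncoord_vert_nearest
    by (auto simp: closed_segment_commute)
  have K: "x \<in> K" "y \<in> K"
    using x(1) y(1) closed_segment_subset[OF vert_in_K vert_in_K convex_K] by blast+
  have "ncoord (of_int (2*k+1) * \<beta>) x = apothem"
    using ncoord_on_segment[OF x(1)] ncoord_edge_vertices[of k] by blast
  then have "tcoord \<phi> x = tng_max \<phi> k p" using right_edge_slack[OF x(2)] sin_right_pos by simp
  moreover have "ncoord (of_int (2*(k-1)+1) * \<beta>) y = apothem"
    using ncoord_on_segment[OF y(1)] ncoord_edge_vertices[of "k-1"] by simp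
  then have "tcoord \<phi> y = tng_min \<phi> k p" using left_edge_slack[OF y(2)] sin_left_pos by simp
  ultimately show ?thesis using that K x(2) y(2) by blast
qed

lemma chord_length_cap:
  assumes "ncoord \<phi> (vert (k+1)) \<le> p" "ncoord \<phi> (vert (k-1)) \<le> p" "p \<le> support \<phi> k"
  shows "chord_length K p \<phi> = (support \<phi> k - p) * chord_rate \<phi> k"
proof -
  obtain x y where xy: "x \<in> K" "y \<in> K" "ncoord \<phi> x = p" "ncoord \<phi> y = p"
    "tcoord \<phi> x = tng_max \<phi> k p" "tcoord \<phi> y = tng_min \<phi> k p"
    using cap_endpoints[OF assms] .
  have "dist x y = (support \<phi> k - p) * chord_rate \<phi> k"
    using dist_on_line[of \<phi> x y] xy tng_range[of p] chord_rate_pos assms(3) by simp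
  moreover have "dist x y \<le> chord_length K p \<phi>" by (rule dist_le_chord_length[OF bounded_K xy(1-4)])
  moreover have "gline p \<phi> \<inter> K \<noteq> {}" using xy by (auto simp: gline_ncoord)
  ultimately show ?thesis using chord_length_cap_le by (simp add: order_antisym)
qed

end

section \<open>The slice of lines of one direction with short chords\<close>

definition slice :: "real \<Rightarrow> real \<Rightarrow> real set" where
  "slice s \<phi> = {p. gline p \<phi> \<inter> K \<noteq> {} \<and> chord_length K p \<phi> \<le> s}"

lemma slice_opposite: "slice s (\<phi> + pi) = uminus -` slice s \<phi>"
  by (auto simp: slice_def chord_length_opposite gline_opposite)

lemma slice_2pi: "slice s (\<phi> + 2*pi) = slice s \<phi>"
  by (simp add: slice_def chord_length_2pi gline_2pi)

text \<open>For a generic direction \<open>\<phi>\<close> there is a top vertex \<open>vert k\<close> (nearest to direction \<open>\<phi>\<close>)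
  and a bottom vertex \<open>vert k'\<close> (nearest to \<open>\<phi> + \<pi>\<close>).\<close>
context
  fixes \<phi> :: real and k k' :: int
  assumes top: "\<bar>offset \<phi> k\<bar> < \<beta>" and bottom: "\<bar>offset (\<phi> + pi) k'\<bar> < \<beta>"
begin

abbreviation (input) h where "h \<equiv> support \<phi> k"
abbreviation (input) h' where "h' \<equiv> support (\<phi> + pi) k'"
abbreviation (input) W where "W \<equiv> chord_rate \<phi> k"
abbreviation (input) W' where "W' \<equiv> chord_rate (\<phi> + pi) k'"

lemma ncoord_ge_bottom: "x \<in> K \<Longrightarrow> - h' \<le> ncoord \<phi> x"
  using ncoord_le_support[OF bottom, of x] ncoord_opposite[of \<phi> x] by simp

lemma ncoord_vert_bottom: "ncoord \<phi> (vert k') = - h'"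
  using ncoord_vert_nearest[OF bottom] ncoord_opposite[of \<phi> "vert k'"] by simp

lemma meets_iff: "gline p \<phi> \<inter> K \<noteq> {} \<longleftrightarrow> - h' \<le> p \<and> p \<le> h"
proof
  assume "gline p \<phi> \<inter> K \<noteq> {}"
  then obtain x where "x \<in> K" "ncoord \<phi> x = p" by (auto simp: gline_ncoord)
  then show "- h' \<le> p \<and> p \<le> h" using ncoord_ge_bottom ncoord_le_support[OF top] by fastforce
next
  assume "- h' \<le> p \<and> p \<le> h"
  then obtain x where "x \<in> closed_segment (vert k) (vert k')" "ncoord \<phi> x = p"
    using level_point_on_segment[of \<phi> "vert k'" p "vert k"]
    by (auto simp: ncoord_vert_bottom ncoord_vert_nearest[OF top])
  moreover have "closed_segment (vert k) (vert k') \<subseteq> K"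
    by (rule closed_segment_subset[OF vert_in_K vert_in_K convex_K])
  ultimately show "gline p \<phi> \<inter> K \<noteq> {}" by (auto simp: gline_ncoord)
qed

lemma chord_length_bottom_cap_le:
  assumes "gline p \<phi> \<inter> K \<noteq> {}"
  shows "chord_length K p \<phi> \<le> (p + h') * W'"
proof -
  have "gline (-p) (\<phi> + pi) \<inter> K \<noteq> {}" using assms by (simp add: gline_opposite)
  moreover have "chord_length K (-p) (\<phi> + pi) = chord_length K p \<phi>"
    using chord_length_opposite[of K "-p" \<phi>] by simp
  ultimately show ?thesis using chord_length_cap_le[OF bottom, of "-p"] by (simp add: algebra_simps)
qed

lemma bottom_cap_levels:
  assumes "p \<le> ncoord \<phi> (vert (k'+1))" "p \<le> ncoord \<phi> (vert (k'-1))" "- h' \<le> p"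
  shows "ncoord (\<phi>+pi) (vert (k'+1)) \<le> -p" "ncoord (\<phi>+pi) (vert (k'-1)) \<le> -p" "-p \<le> h'"
  using assms by (auto simp: ncoord_opposite)

lemma chord_length_bottom_cap:
  assumes "p \<le> ncoord \<phi> (vert (k'+1))" "p \<le> ncoord \<phi> (vert (k'-1))" "- h' \<le> p"
  shows "chord_length K p \<phi> = (p + h') * W'"
  using chord_length_cap[OF bottom bottom_cap_levels[OF assms]] by (simp add: chord_length_opposite)

lemma bottom_cap_pair:
  assumes "p \<le> ncoord \<phi> (vert (k'+1))" "p \<le> ncoord \<phi> (vert (k'-1))" "- h' \<le> p"
  obtains x y where "x \<in> K" "y \<in> K" "ncoord \<phi> x = p" "ncoord \<phi> y = p"
    "tcoord \<phi> y - tcoord \<phi> x = (p + h') * W'"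
proof -
  obtain x y where xy: "x \<in> K" "y \<in> K" "ncoord (\<phi>+pi) x = -p" "ncoord (\<phi>+pi) y = -p"
    "tcoord (\<phi>+pi) x = tng_max (\<phi>+pi) k' (-p)" "tcoord (\<phi>+pi) y = tng_min (\<phi>+pi) k' (-p)"
    using cap_endpoints[OF bottom bottom_cap_levels[OF assms]] .
  have "tcoord \<phi> y - tcoord \<phi> x = tng_max (\<phi>+pi) k' (-p) - tng_min (\<phi>+pi) k' (-p)"
    using xy(5,6) tcoord_opposite[of \<phi> x] tcoord_opposite[of \<phi> y] by linarith
  also have "\<dots> = (p + h') * W'" using tng_range[OF bottom, of "-p"] by simp
  finally show ?thesis using that xy(1-4) by (simp add: ncoord_opposite)
qed

lemma top_cap_pair:
  assumes "ncoord \<phi> (vert (k+1)) \<le> p" "ncoord \<phi> (vert (k-1)) \<le> p" "p \<le> h"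
  obtains x y where "x \<in> K" "y \<in> K" "ncoord \<phi> x = p" "ncoord \<phi> y = p"
    "tcoord \<phi> y - tcoord \<phi> x = (h - p) * W"
proof -
  obtain x y where "x \<in> K" "y \<in> K" "ncoord \<phi> x = p" "ncoord \<phi> y = p"
    "tcoord \<phi> x = tng_max \<phi> k p" "tcoord \<phi> y = tng_min \<phi> k p"
    using cap_endpoints[OF top assms] .
  then show ?thesis using that[of y x] tng_range[OF top, of p] by simp
qed

abbreviation (input) top_nb where "top_nb \<equiv> max (ncoord \<phi> (vert (k+1))) (ncoord \<phi> (vert (k-1)))"
abbreviation (input) bot_nb where "bot_nb \<equiv> min (ncoord \<phi> (vert (k'+1))) (ncoord \<phi> (vert (k'-1)))"

text \<open>In the middle range between the two caps the chord is, by concavity, at least the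
  shorter of the two chords at the ends of that range.\<close>
lemma chord_length_middle:
  assumes "bot_nb \<le> p" "p \<le> top_nb" "bot_nb < top_nb"
  shows "min ((bot_nb + h') * W') ((h - top_nb) * W) \<le> chord_length K p \<phi>"
proof -
  have "- h' \<le> bot_nb" using ncoord_ge_bottom[OF vert_in_K] by simp
  then obtain x1 y1 where xy1: "x1 \<in> K" "y1 \<in> K" "ncoord \<phi> x1 = bot_nb" "ncoord \<phi> y1 = bot_nb"
    "tcoord \<phi> y1 - tcoord \<phi> x1 = (bot_nb + h') * W'"
    using bottom_cap_pair by (metis min.cobounded1 min.cobounded2)
  have "top_nb \<le> h" using vert_succ_below[OF top] vert_pred_below[OF top] by simp
  then obtain x2 y2 where xy2: "x2 \<in> K" "y2 \<in> K" "ncoord \<phi> x2 = top_nb" "ncoord \<phi> y2 = top_nb"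
    "tcoord \<phi> y2 - tcoord \<phi> x2 = (h - top_nb) * W"
    using top_cap_pair by (metis max.cobounded1 max.cobounded2)
  define u where "u = (p - bot_nb) / (top_nb - bot_nb)"
  have u: "0 \<le> u" "u \<le> 1" using assms by (auto simp: u_def field_simps)
  have "u * (top_nb - bot_nb) = p - bot_nb" using assms(3) by (simp add: u_def)
  then have u_level: "(1 - u) * bot_nb + u * top_nb = p" by (simp add: algebra_simps)
  have "min ((bot_nb + h') * W') ((h - top_nb) * W)
      \<le> (1 - u) * ((bot_nb + h') * W') + u * ((h - top_nb) * W)"
  proof -
    have "(1 - u) * min ((bot_nb + h') * W') ((h - top_nb) * W) \<le> (1 - u) * ((bot_nb + h') * W')"
      "u * min ((bot_nb + h') * W') ((h - top_nb) * W) \<le> u * ((h - top_nb) * W)"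
      using u by (simp_all add: mult_left_mono)
    then show ?thesis by (simp add: algebra_simps)
  qed
  also have "\<dots> \<le> chord_length K p \<phi>"
    using chord_length_interpolate[OF convex_K bounded_K xy1(1-4) xy2(1-4) u]
    unfolding xy1(5) xy2(5) u_level by (rule order_trans[OF abs_ge_self])
  finally show ?thesis .
qed

lemma cap_lines_in_slice:
  assumes "- h' \<le> p" "p \<le> h" and cap: "p + h' \<le> s / W' \<or> h - p \<le> s / W"
  shows "p \<in> slice s \<phi>"
proof -
  have W: "0 < W" "0 < W'" using chord_rate_pos[OF top] chord_rate_pos[OF bottom] by auto
  have m: "gline p \<phi> \<inter> K \<noteq> {}" using meets_iff assms(1,2) by auto
  from cap have "chord_length K p \<phi> \<le> s"
  proof
    assume "p + h' \<le> s / W'"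
    then have "(p + h') * W' \<le> s" using W by (simp add: pos_le_divide_eq)
    then show ?thesis using chord_length_bottom_cap_le[OF m] by linarith
  next
    assume "h - p \<le> s / W"
    then have "(h - p) * W \<le> s" using W by (simp add: pos_le_divide_eq)
    then show ?thesis using chord_length_cap_le[OF top m] by linarith
  qed
  with m show ?thesis by (simp add: slice_def)
qed

text \<open>Conversely, a line with chord at most s lies in one of the two caps, provided the chords in
  the middle range are longer than s (which holds if the cap ranges touch, or if the caps of
  chord length s end strictly inside them).\<close>
lemma slice_lines_in_caps:
  assumes "p \<in> slice s \<phi>"
    and middle: "bot_nb < top_nb \<Longrightarrow> s / W < h - top_nb \<and> s / W' < h' + bot_nb"
  shows "p + h' \<le> s / W' \<or> h - p \<le> s / W"
proof (rule ccontr)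
  have W: "0 < W" "0 < W'" using chord_rate_pos[OF top] chord_rate_pos[OF bottom] by auto
  from assms(1) have m: "gline p \<phi> \<inter> K \<noteq> {}" and c: "chord_length K p \<phi> \<le> s"
    by (auto simp: slice_def)
  from m have pb: "- h' \<le> p" "p \<le> h" using meets_iff by auto
  assume "\<not> (p + h' \<le> s / W' \<or> h - p \<le> s / W)"
  then have "s / W < h - p" "s / W' < p + h'" by auto
  then have long: "s < (h - p) * W" "s < (p + h') * W'" using W by (simp_all add: pos_divide_less_eq)
  consider "top_nb \<le> p" | "p \<le> bot_nb" | "bot_nb < p" "p < top_nb" by linarith
  then show False
  proof cases
    case 1
    then show False using chord_length_cap[OF top _ _ pb(2)] c long(1) by simp
  next
    case 2
    then show False using chord_length_bottom_cap[OF _ _ pb(1)] c long(2) by simp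
  next
    case 3
    then have "s / W < h - top_nb" "s / W' < bot_nb + h'" using middle by auto
    then have "s < (h - top_nb) * W" "s < (bot_nb + h') * W'" using W by (auto simp: pos_divide_less_eq)
    then show False using chord_length_middle[of p] 3 c by linarith
  qed
qed

lemma slice_eq:
  fixes s :: real
  assumes s: "0 \<le> s"
    and top_room: "s / W \<le> h - ncoord \<phi> (vert (k+1))" "s / W \<le> h - ncoord \<phi> (vert (k-1))"
    and bottom_room: "s / W' \<le> h' + ncoord \<phi> (vert (k'+1))" "s / W' \<le> h' + ncoord \<phi> (vert (k'-1))"
    and overlap: "bot_nb \<le> top_nb"
    and middle: "bot_nb < top_nb \<Longrightarrow> s / W < h - top_nb \<and> s / W' < h' + bot_nb"
  shows "- h' + s / W' \<le> h - s / W"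
    and "slice s \<phi> = {- h' .. - h' + s / W'} \<union> {h - s / W .. h}"
proof -
  have "0 \<le> s / W" "0 \<le> s / W'" using s chord_rate_pos[OF top] chord_rate_pos[OF bottom] by auto
  moreover show ord: "- h' + s / W' \<le> h - s / W" using top_room bottom_room overlap by linarith
  ultimately have in_range: "- h' \<le> p" "p \<le> h" if "p \<in> {- h' .. - h' + s / W'} \<union> {h - s / W .. h}" for p
    using that by auto
  show "slice s \<phi> = {- h' .. - h' + s / W'} \<union> {h - s / W .. h}"
  proof (intro set_eqI iffI)
    fix p assume p: "p \<in> slice s \<phi>"
    then have "- h' \<le> p" "p \<le> h" using meets_iff by (auto simp: slice_def)
    with slice_lines_in_caps[OF p middle] show "p \<in> {- h' .. - h' + s / W'} \<union> {h - s / W .. h}"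
      by auto
  next
    fix p assume p: "p \<in> {- h' .. - h' + s / W'} \<union> {h - s / W .. h}"
    then have "p + h' \<le> s / W' \<or> h - p \<le> s / W" by auto
    with in_range[OF p] show "p \<in> slice s \<phi>" by (rule cap_lines_in_slice)
  qed
qed

end

section \<open>Admissible chord lengths\<close>

text \<open>The cap of chord length s at a vertex must stay above both neighbouring vertices; by the
  depth formula below this amounts to \<open>s sin \<theta> \<le> 2r sin \<beta> sin 2\<beta>\<close> for the angles
  \<open>\<theta> = \<beta> \<plusminus> offset\<close> in \<open>(0, 2\<beta>)\<close>. For \<open>n \<ge> 4\<close> we need it with room to spare, since the
  two caps do not touch then.\<close>
definition cap_fits :: "real \<Rightarrow> bool" where
  "cap_fits s \<longleftrightarrow> (\<forall>\<theta>. 0 < \<theta> \<and> \<theta> < 2*\<beta> \<longrightarrow> s * sin \<theta> \<le> 2 * r * sin \<beta> * sin (2*\<beta>))"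

definition cap_fits_strictly :: "real \<Rightarrow> bool" where
  "cap_fits_strictly s \<longleftrightarrow> (\<forall>\<theta>. 0 < \<theta> \<and> \<theta> < 2*\<beta> \<longrightarrow> s * sin \<theta> < 2 * r * sin \<beta> * sin (2*\<beta>))"

definition admissible :: "real \<Rightarrow> bool" where
  "admissible s \<longleftrightarrow> (4 \<le> n \<and> cap_fits_strictly s) \<or> (n = 3 \<and> cap_fits s)"

lemma admissible_cap_fits: "admissible s \<Longrightarrow> cap_fits s"
  by (auto simp: admissible_def cap_fits_def cap_fits_strictly_def less_imp_le)

context
  fixes \<phi> :: real and k :: int
  assumes nearest: "\<bar>offset \<phi> k\<bar> < \<beta>"
begin

lemma cap_angles: "0 < \<beta> + offset \<phi> k \<and> \<beta> + offset \<phi> k < 2*\<beta>" "0 < \<beta> - offset \<phi> k \<and> \<beta> - offset \<phi> k < 2*\<beta>"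
  using nearest by auto

lemma depth_succ: "support \<phi> k - ncoord \<phi> (vert (k+1)) = 2 * r * sin \<beta> * sin (\<beta> - offset \<phi> k)"
  using cos_diff_minus_cos_add[of \<beta> "\<beta> - offset \<phi> k"]
  unfolding ncoord_vert_succ[OF nearest] support_def by (simp add: algebra_simps)

lemma depth_pred: "support \<phi> k - ncoord \<phi> (vert (k-1)) = 2 * r * sin \<beta> * sin (\<beta> + offset \<phi> k)"
  using cos_diff_minus_cos_add[of \<beta> "\<beta> + offset \<phi> k"]
  unfolding ncoord_vert_pred[OF nearest] support_def by (simp add: algebra_simps)

lemma cap_margin_succ:
  "support \<phi> k - ncoord \<phi> (vert (k+1)) - s / chord_rate \<phi> k
    = sin (\<beta> - offset \<phi> k) / sin (2*\<beta>) * (2 * r * sin \<beta> * sin (2*\<beta>) - s * sin (\<beta> + offset \<phi> k))"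
  unfolding depth_succ chord_rate_def using sin_2\<beta>_pos by (simp add: field_simps)

lemma cap_margin_pred:
  "support \<phi> k - ncoord \<phi> (vert (k-1)) - s / chord_rate \<phi> k
    = sin (\<beta> + offset \<phi> k) / sin (2*\<beta>) * (2 * r * sin \<beta> * sin (2*\<beta>) - s * sin (\<beta> - offset \<phi> k))"
  unfolding depth_pred chord_rate_def using sin_2\<beta>_pos by (simp add: field_simps)

lemma cap_room:
  assumes "cap_fits s"
  shows "s / chord_rate \<phi> k \<le> support \<phi> k - ncoord \<phi> (vert (k+1))"
    and "s / chord_rate \<phi> k \<le> support \<phi> k - ncoord \<phi> (vert (k-1))"
proof -
  have "s * sin (\<beta> + offset \<phi> k) \<le> 2 * r * sin \<beta> * sin (2*\<beta>)"
    "s * sin (\<beta> - offset \<phi> k) \<le> 2 * r * sin \<beta> * sin (2*\<beta>)"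
    using assms cap_angles unfolding cap_fits_def by blast+
  then show "s / chord_rate \<phi> k \<le> support \<phi> k - ncoord \<phi> (vert (k+1))"
    "s / chord_rate \<phi> k \<le> support \<phi> k - ncoord \<phi> (vert (k-1))"
    using cap_margin_succ cap_margin_pred sin_right_pos[OF nearest] sin_left_pos[OF nearest]
      sin_2\<beta>_pos
    by (smt (verit) divide_pos_pos mult_nonneg_nonneg)+
qed

lemma cap_room_strict:
  assumes "cap_fits_strictly s"
  shows "s / chord_rate \<phi> k < support \<phi> k - ncoord \<phi> (vert (k+1))"
    and "s / chord_rate \<phi> k < support \<phi> k - ncoord \<phi> (vert (k-1))"
proof -
  have "s * sin (\<beta> + offset \<phi> k) < 2 * r * sin \<beta> * sin (2*\<beta>)"
    "s * sin (\<beta> - offset \<phi> k) < 2 * r * sin \<beta> * sin (2*\<beta>)"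
    using assms cap_angles unfolding cap_fits_strictly_def by blast+
  then show "s / chord_rate \<phi> k < support \<phi> k - ncoord \<phi> (vert (k+1))"
    "s / chord_rate \<phi> k < support \<phi> k - ncoord \<phi> (vert (k-1))"
    using cap_margin_succ cap_margin_pred sin_right_pos[OF nearest] sin_left_pos[OF nearest]
      sin_2\<beta>_pos
    by (smt (verit) divide_pos_pos mult_pos_pos)+
qed

lemma top_neighbour_nonneg:
  assumes "4 \<le> n"
  shows "0 \<le> max (ncoord \<phi> (vert (k+1))) (ncoord \<phi> (vert (k-1)))"
proof -
  have \<beta>4: "\<beta> \<le> pi / 4" using assms n_pos unfolding \<beta>_def by (simp add: field_simps)
  show ?thesis
  proof (cases "0 \<le> offset \<phi> k")
    case True
    have "0 \<le> cos (2*\<beta> - offset \<phi> k)" using True nearest \<beta>4 by (intro cos_ge_zero) auto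
    then show ?thesis unfolding ncoord_vert_succ[OF nearest] using r_pos by (simp add: le_max_iff_disj)
  next
    case False
    have "0 \<le> cos (2*\<beta> + offset \<phi> k)" using False nearest \<beta>4 by (intro cos_ge_zero) auto
    then show ?thesis unfolding ncoord_vert_pred[OF nearest] using r_pos by (simp add: le_max_iff_disj)
  qed
qed

end

text \<open>In a triangle the neighbours of the top vertex are the bottom vertex and the remaining
  vertex, so the two cap ranges meet exactly.\<close>
lemma triangle_neighbours:
  assumes n: "n = 3" and top: "\<bar>offset \<phi> k\<bar> < \<beta>" and bottom: "\<bar>offset (\<phi> + pi) k'\<bar> < \<beta>"
  shows "max (ncoord \<phi> (vert (k+1))) (ncoord \<phi> (vert (k-1)))
       = min (ncoord \<phi> (vert (k'+1))) (ncoord \<phi> (vert (k'-1)))"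
proof -
  have per: "vert (j + 3 * m) = vert j" for j m using vert_periodic[of j m] n by simp
  define d where "d = (k' - k) mod 3"
  define m where "m = (k' - k) div 3"
  have kd: "k' = k + d + 3 * m" by (simp add: d_def m_def)
  have lo: "- support (\<phi>+pi) k' \<le> ncoord \<phi> (vert j)" for j
    using ncoord_ge_bottom[OF top bottom vert_in_K] .
  note facts = ncoord_vert_nearest[OF top] ncoord_vert_bottom[OF top bottom]
    support_pos[OF top] support_pos[OF bottom] vert_succ_below[OF top] vert_pred_below[OF top]
  have "d = 0 \<or> d = 1 \<or> d = 2" unfolding d_def by presburger
  then consider "d = 0" | "d = 1" | "d = 2" by blast
  then show ?thesis
  proof cases
    case 1
    then have "vert k' = vert k" using per[of k m] kd by simp
    then show ?thesis using facts by simp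
  next
    case 2
    have "vert (k'+1) = vert (k-1)" "vert (k'-1) = vert k" "vert (k+1) = vert k'"
      using per[of "k-1" "m+1"] per[of k m] per[of "k+1" m] kd 2 by (simp_all add: algebra_simps)
    then show ?thesis using facts lo[of "k-1"] by simp
  next
    case 3
    have "vert (k'+1) = vert k" "vert (k'-1) = vert (k+1)" "vert (k-1) = vert k'"
      using per[of k "m+1"] per[of "k+1" m] per[of "k-1" "m+1"] kd 3 by (simp_all add: algebra_simps)
    then show ?thesis using facts lo[of "k+1"] by simp
  qed
qed

lemma slice_admissible:
  assumes top: "\<bar>offset \<phi> k\<bar> < \<beta>" and bottom: "\<bar>offset (\<phi> + pi) k'\<bar> < \<beta>"
    and s: "0 \<le> s" "admissible s"
  shows "- support (\<phi>+pi) k' + s / chord_rate (\<phi>+pi) k' \<le> support \<phi> k - s / chord_rate \<phi> k"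
    and "slice s \<phi> = {- support (\<phi>+pi) k' .. - support (\<phi>+pi) k' + s / chord_rate (\<phi>+pi) k'}
      \<union> {support \<phi> k - s / chord_rate \<phi> k .. support \<phi> k}"
proof -
  have fits: "cap_fits s" using s(2) by (rule admissible_cap_fits)
  have opp: "ncoord (\<phi>+pi) x = - ncoord \<phi> x" for x by (rule ncoord_opposite)
  have room_bottom: "s / chord_rate (\<phi>+pi) k' \<le> support (\<phi>+pi) k' + ncoord \<phi> (vert (k'+1))"
    "s / chord_rate (\<phi>+pi) k' \<le> support (\<phi>+pi) k' + ncoord \<phi> (vert (k'-1))"
    using cap_room[OF bottom fits] by (simp_all add: opp)
  have middle: "s / chord_rate \<phi> k < support \<phi> k - max (ncoord \<phi> (vert (k+1))) (ncoord \<phi> (vert (k-1)))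
      \<and> s / chord_rate (\<phi>+pi) k' < support (\<phi>+pi) k' + min (ncoord \<phi> (vert (k'+1))) (ncoord \<phi> (vert (k'-1)))"
    if "min (ncoord \<phi> (vert (k'+1))) (ncoord \<phi> (vert (k'-1)))
      < max (ncoord \<phi> (vert (k+1))) (ncoord \<phi> (vert (k-1)))"
  proof -
    have "n \<noteq> 3" using that triangle_neighbours[OF _ top bottom] by auto
    then have strict: "cap_fits_strictly s" using s(2) by (simp add: admissible_def)
    show ?thesis
      using cap_room_strict[OF top strict] cap_room_strict[OF bottom strict, unfolded opp]
      by (simp add: max_def min_def)
  qed
  have overlap: "min (ncoord \<phi> (vert (k'+1))) (ncoord \<phi> (vert (k'-1)))
      \<le> max (ncoord \<phi> (vert (k+1))) (ncoord \<phi> (vert (k-1)))"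
  proof (cases "n = 3")
    case True
    then show ?thesis using triangle_neighbours[OF True top bottom] by simp
  next
    case False
    then have "4 \<le> n" using n_ge_3 by simp
    then show ?thesis
      using top_neighbour_nonneg[OF top] top_neighbour_nonneg[OF bottom] unfolding opp by linarith
  qed
  show "- support (\<phi>+pi) k' + s / chord_rate (\<phi>+pi) k' \<le> support \<phi> k - s / chord_rate \<phi> k"
    "slice s \<phi> = {- support (\<phi>+pi) k' .. - support (\<phi>+pi) k' + s / chord_rate (\<phi>+pi) k'}
      \<union> {support \<phi> k - s / chord_rate \<phi> k .. support \<phi> k}"
    using slice_eq[OF top bottom s(1) cap_room[OF top fits] room_bottom overlap middle] by auto
qed

lemma slice_measure:
  assumes top: "\<bar>offset \<phi> k\<bar> < \<beta>" and bottom: "\<bar>offset (\<phi> + pi) k'\<bar> < \<beta>"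
    and s: "0 \<le> s" "admissible s"
  shows "slice s \<phi> \<in> sets lborel"
    and "emeasure lborel (slice s \<phi>) = ennreal (s / chord_rate \<phi> k + s / chord_rate (\<phi>+pi) k')"
proof -
  have W: "0 \<le> s / chord_rate \<phi> k" "0 \<le> s / chord_rate (\<phi>+pi) k'"
    using s chord_rate_pos[OF top] chord_rate_pos[OF bottom] by auto
  note slice = slice_admissible[OF top bottom s]
  show "slice s \<phi> \<in> sets lborel" unfolding slice(2) by simp
  have "slice s \<phi> = {- support (\<phi>+pi) k' .. - support (\<phi>+pi) k' + s / chord_rate (\<phi>+pi) k'}
      \<union> {support \<phi> k - s / chord_rate \<phi> k .. (support \<phi> k - s / chord_rate \<phi> k) + s / chord_rate \<phi> k}"
    using slice(2) by simp
  then have "emeasure lborel (slice s \<phi>) = ennreal (s / chord_rate (\<phi>+pi) k' + s / chord_rate \<phi> k)"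
    using emeasure_two_intervals[OF W(2,1) slice(1)] by simp
  then show "emeasure lborel (slice s \<phi>) = ennreal (s / chord_rate \<phi> k + s / chord_rate (\<phi>+pi) k')"
    by (simp add: add.commute)
qed

section \<open>The width of the short-chord slices as a function of the direction\<close>

definition nearest_vertex :: "real \<Rightarrow> int" where
  "nearest_vertex \<phi> = \<lfloor>\<phi> / (2*\<beta>) + 1/2\<rfloor>"

definition nearest_offset :: "real \<Rightarrow> real" where
  "nearest_offset \<phi> = offset \<phi> (nearest_vertex \<phi>)"

lemma nearest_offset_bounds: "- \<beta> \<le> nearest_offset \<phi>" "nearest_offset \<phi> < \<beta>"
proof -
  have a: "of_int (nearest_vertex \<phi>) \<le> \<phi> / (2*\<beta>) + 1/2" "\<phi> / (2*\<beta>) + 1/2 < of_int (nearest_vertex \<phi>) + 1"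
    unfolding nearest_vertex_def by linarith+
  have \<beta>2: "0 < 2*\<beta>" using \<beta>_pos by simp
  from a(1) have "2*\<beta> * of_int (nearest_vertex \<phi>) \<le> \<phi> + \<beta>" using \<beta>2 by (simp add: field_simps)
  then show "- \<beta> \<le> nearest_offset \<phi>" by (simp add: nearest_offset_def offset_def)
  from a(2) have "\<phi> + \<beta> < 2*\<beta> * (of_int (nearest_vertex \<phi>) + 1)" using \<beta>2 by (simp add: field_simps)
  then show "nearest_offset \<phi> < \<beta>" by (simp add: nearest_offset_def offset_def algebra_simps)
qed

lemma nearest_offset_shift: "nearest_offset (\<phi> + 2*\<beta> * of_int m) = nearest_offset \<phi>"
proof -
  have "(\<phi> + 2*\<beta> * of_int m) / (2*\<beta>) + 1/2 = (\<phi> / (2*\<beta>) + 1/2) + of_int m"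
    using \<beta>_pos by (simp add: field_simps)
  then have "nearest_vertex (\<phi> + 2*\<beta> * of_int m) = nearest_vertex \<phi> + m"
    unfolding nearest_vertex_def by (simp only: floor_add_int)
  then show ?thesis by (simp add: nearest_offset_def offset_def algebra_simps)
qed

lemma nearest_offset_small: "- \<beta> \<le> x \<Longrightarrow> x < \<beta> \<Longrightarrow> nearest_offset x = x"
proof -
  assume x: "- \<beta> \<le> x" "x < \<beta>"
  have "0 \<le> x / (2*\<beta>) + 1/2" "x / (2*\<beta>) + 1/2 < 1" using x \<beta>_pos by (auto simp: field_simps)
  then have "nearest_vertex x = 0" unfolding nearest_vertex_def by linarith
  then show "nearest_offset x = x" by (simp add: nearest_offset_def offset_def)
qed

lemma nearest_offset_measurable[measurable]: "nearest_offset \<in> borel_measurable borel"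
  unfolding nearest_offset_def offset_def nearest_vertex_def by measurable

definition cap_profile :: "real \<Rightarrow> real \<Rightarrow> real" where
  "cap_profile s \<psi> = s * sin (\<beta> - \<psi>) * sin (\<beta> + \<psi>) / sin (2*\<beta>)"

definition cap_width :: "real \<Rightarrow> real \<Rightarrow> real" where
  "cap_width s \<phi> = cap_profile s (nearest_offset \<phi>)"

lemma cap_width_measurable[measurable]: "cap_width s \<in> borel_measurable borel"
  unfolding cap_width_def cap_profile_def by measurable

lemma cap_width_eq: "cap_width s \<phi> = s / chord_rate \<phi> (nearest_vertex \<phi>)"
  by (simp add: cap_width_def cap_profile_def chord_rate_def nearest_offset_def)

lemma cap_profile_nonneg:
  assumes "0 \<le> s" "- \<beta> \<le> \<psi>" "\<psi> \<le> \<beta>" shows "0 \<le> cap_profile s \<psi>"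
proof -
  have "0 \<le> sin (\<beta> - \<psi>)" "0 \<le> sin (\<beta> + \<psi>)"
    using assms(2,3) \<beta>_le pi_gt3 by (auto intro!: sin_ge_zero)
  then show ?thesis using assms(1) sin_2\<beta>_pos by (simp add: cap_profile_def)
qed

lemma cap_width_nonneg: "0 \<le> s \<Longrightarrow> 0 \<le> cap_width s \<phi>"
  unfolding cap_width_def using nearest_offset_bounds[of \<phi>] by (intro cap_profile_nonneg) auto

lemma cap_width_shift: "cap_width s (\<phi> + 2*\<beta> * of_int m) = cap_width s \<phi>"
  by (simp add: cap_width_def nearest_offset_shift)

lemma cap_width_2pi: "cap_width s (\<phi> + 2*pi) = cap_width s \<phi>"
proof -
  have "\<phi> + 2*\<beta> * of_int (int n) = \<phi> + 2*pi" using n_times_\<beta> by (simp add: algebra_simps)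
  then show ?thesis using cap_width_shift[of s \<phi> "int n"] by metis
qed

definition vertex_integral :: "real \<Rightarrow> real" where
  "vertex_integral s = s * (sin (2*\<beta>) - 2*\<beta> * cos (2*\<beta>)) / (2 * sin (2*\<beta>))"

definition cap_primitive :: "real \<Rightarrow> real \<Rightarrow> real" where
  "cap_primitive s x = s / sin (2*\<beta>) * (sin (2*x) / 4 - x * cos (2*\<beta>) / 2)"

lemma cap_primitive_deriv: "(cap_primitive s has_real_derivative cap_profile s x) (at x)"
proof -
  have "(cap_primitive s has_real_derivative s / sin (2*\<beta>) * (cos (2*x) * 2 / 4 - cos (2*\<beta>) / 2)) (at x)"
    unfolding cap_primitive_def[abs_def] using sin_2\<beta>_pos by (auto intro!: derivative_eq_intros)
  moreover have "cos (2*x) * 2 / 4 - cos (2*\<beta>) / 2 = sin (\<beta> - x) * sin (\<beta> + x)"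
    using sin_diff_mult_sin_add[of \<beta> x] by simp
  then have "s / sin (2*\<beta>) * (cos (2*x) * 2 / 4 - cos (2*\<beta>) / 2) = cap_profile s x"
    unfolding cap_profile_def by simp
  ultimately show ?thesis by simp
qed

lemma cap_primitive_diff: "cap_primitive s \<beta> - cap_primitive s (- \<beta>) = vertex_integral s"
  unfolding cap_primitive_def vertex_integral_def using sin_2\<beta>_pos by (simp add: field_simps)

lemma vertex_integral_nonneg:
  assumes "0 \<le> s" shows "0 \<le> vertex_integral s"
proof -
  have "cap_primitive s (- \<beta>) \<le> cap_primitive s \<beta>"
  proof (rule DERIV_nonneg_imp_nondecreasing[of "- \<beta>" \<beta>])
    show "- \<beta> \<le> \<beta>" using \<beta>_pos by simp
    fix x assume "- \<beta> \<le> x" "x \<le> \<beta>"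
    then show "\<exists>y. (cap_primitive s has_real_derivative y) (at x) \<and> 0 \<le> y"
      using cap_primitive_deriv cap_profile_nonneg[OF assms] by blast
  qed
  then show ?thesis using cap_primitive_diff[of s] by simp
qed

lemma integral_cap_width_vertex:
  assumes "0 \<le> s"
  shows "(\<integral>\<^sup>+x. indicator {-\<beta>..<\<beta>} x * ennreal (cap_width s x) \<partial>lborel) = ennreal (vertex_integral s)"
proof -
  have "(\<integral>\<^sup>+x. indicator {-\<beta>..<\<beta>} x * ennreal (cap_width s x) \<partial>lborel)
      = (\<integral>\<^sup>+x. ennreal (cap_profile s x) * indicator {-\<beta>..\<beta>} x \<partial>lborel)"
  proof (rule nn_integral_cong_AE)
    show "AE x in lborel. indicator {-\<beta>..<\<beta>} x * ennreal (cap_width s x)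
        = ennreal (cap_profile s x) * indicator {-\<beta>..\<beta>} x"
      using AE_lborel_singleton[of \<beta>]
      by eventually_elim (auto simp: indicator_def cap_width_def nearest_offset_small)
  qed
  also have "\<dots> = ennreal (vertex_integral s)"
    unfolding cap_primitive_diff[symmetric]
    using cap_primitive_deriv cap_profile_nonneg[OF assms] \<beta>_pos
    by (intro nn_integral_FTC_Icc) (auto simp: cap_profile_def)
  finally show ?thesis .
qed

lemma integral_cap_width:
  assumes "0 \<le> s"
  shows "(\<integral>\<^sup>+x. indicator {0..<2*pi} x * ennreal (cap_width s x) \<partial>lborel) = ennreal (real n * vertex_integral s)"
proof -
  have per: "ennreal (cap_width s (x + 2*\<beta>)) = ennreal (cap_width s x)" for x
    using cap_width_shift[of s x 1] by simp
  have full: "-\<beta> + real n * (2*\<beta>) = 2*pi - \<beta>" using n_times_\<beta> by (simp add: algebra_simps)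
  have turn: "cap_width s (x + (2*pi - \<beta>)) = cap_width s (-\<beta> + x)" for x
    using cap_width_2pi[of s "-\<beta> + x"] by (simp add: algebra_simps)
  have "(\<integral>\<^sup>+x. indicator {0..<2*pi} x * ennreal (cap_width s x) \<partial>lborel)
      = (\<integral>\<^sup>+x. indicator {0..<2*pi} x * ennreal (cap_width s (x + (2*pi - \<beta>))) \<partial>lborel)"
    using \<beta>_pos \<beta>_le pi_gt3 cap_width_2pi
    by (intro nn_integral_periodic_shift[symmetric]) auto
  also have "\<dots> = (\<integral>\<^sup>+x. indicator {-\<beta>..<2*pi - \<beta>} (-\<beta> + x) * ennreal (cap_width s (-\<beta> + x)) \<partial>lborel)"
    by (intro nn_integral_cong) (simp add: indicator_def turn)
  also have "\<dots> = (\<integral>\<^sup>+x. indicator {-\<beta>..<2*pi - \<beta>} x * ennreal (cap_width s x) \<partial>lborel)"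
    by (rule nn_integral_translate[symmetric]) measurable
  also have "\<dots> = of_nat n * (\<integral>\<^sup>+x. indicator {-\<beta>..<\<beta>} x * ennreal (cap_width s x) \<partial>lborel)"
    using nn_integral_periods[of "\<lambda>x. ennreal (cap_width s x)" "2*\<beta>" "-\<beta>" n] per \<beta>_pos
    unfolding full by simp
  also have "\<dots> = ennreal (real n * vertex_integral s)"
    unfolding integral_cap_width_vertex[OF assms] by (simp add: ennreal_mult' ennreal_of_nat_eq_real_of_nat)
  finally show ?thesis .
qed

section \<open>Integrating over the directions\<close>

definition half_slice_measure :: "real \<Rightarrow> real \<Rightarrow> ennreal" where
  "half_slice_measure s \<phi> = emeasure lborel (slice s \<phi> \<inter> {0..})"

lemma short_lines_Pair: "(\<lambda>p. (p, \<phi>)) -` short_lines K s = slice s \<phi>"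
  by (auto simp: short_lines_def slice_def)

lemma half_slice_measure_measurable:
  assumes "0 \<le> s" shows "half_slice_measure s \<in> borel_measurable borel"
proof -
  have "short_lines K s \<inter> ({0..} \<times> UNIV) \<in> sets (lborel \<Otimes>\<^sub>M lborel)"
    unfolding lborel_prod sets_lborel using short_lines_borel[OF compact_K assms]
    by (rule sets.Int) (auto intro!: borel_closed closed_Times)
  from lborel_pair.measurable_emeasure_Pair2[OF this] show ?thesis
    by (simp add: half_slice_measure_def[abs_def] vimage_Int short_lines_Pair)
qed

lemma half_slice_measure_2pi: "half_slice_measure s (\<phi> + 2*pi) = half_slice_measure s \<phi>"
  by (simp add: half_slice_measure_def slice_2pi)

lemma AE_generic_direction: "AE \<phi> in lborel. nearest_offset \<phi> \<noteq> - \<beta> \<and> nearest_offset (\<phi> + pi) \<noteq> - \<beta>"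
proof -
  have "{\<phi>. \<not> (nearest_offset \<phi> \<noteq> - \<beta> \<and> nearest_offset (\<phi> + pi) \<noteq> - \<beta>)} \<subseteq>
     range (\<lambda>j::int. (2 * of_int j - 1) * \<beta>) \<union> range (\<lambda>j::int. (2 * of_int j - 1) * \<beta> - pi)"
  proof
    fix \<phi> assume "\<phi> \<in> {\<phi>. \<not> (nearest_offset \<phi> \<noteq> - \<beta> \<and> nearest_offset (\<phi> + pi) \<noteq> - \<beta>)}"
    then consider "nearest_offset \<phi> = - \<beta>" | "nearest_offset (\<phi> + pi) = - \<beta>" by auto
    then show "\<phi> \<in> range (\<lambda>j::int. (2 * of_int j - 1) * \<beta>) \<union> range (\<lambda>j::int. (2 * of_int j - 1) * \<beta> - pi)"
    proof cases
      case 1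
      then have "\<phi> = (2 * of_int (nearest_vertex \<phi>) - 1) * \<beta>"
        by (simp add: nearest_offset_def offset_def algebra_simps)
      then show ?thesis by blast
    next
      case 2
      then have "\<phi> = (2 * of_int (nearest_vertex (\<phi> + pi)) - 1) * \<beta> - pi"
        by (simp add: nearest_offset_def offset_def algebra_simps)
      then show ?thesis by blast
    qed
  qed
  moreover have "range (\<lambda>j::int. (2 * of_int j - 1) * \<beta>) \<union> range (\<lambda>j::int. (2 * of_int j - 1) * \<beta> - pi)
      \<in> null_sets lborel"
    by (intro countable_imp_null_set_lborel) auto
  ultimately show ?thesis by (intro AE_I') auto
qed

text \<open>For a generic direction the lines with \<open>p \<ge> 0\<close> in directions \<open>\<phi>\<close> and \<open>\<phi> + \<pi>\<close> together
  make up the whole slice of \<open>\<phi>\<close>, whose measure is the sum of the two cap widths.\<close>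
lemma half_slice_measure_opposite:
  assumes s: "0 \<le> s" "admissible s"
    and generic: "nearest_offset \<phi> \<noteq> - \<beta>" "nearest_offset (\<phi> + pi) \<noteq> - \<beta>"
  shows "half_slice_measure s \<phi> + half_slice_measure s (\<phi> + pi) = ennreal (cap_width s \<phi> + cap_width s (\<phi> + pi))"
proof -
  have top: "\<bar>offset \<phi> (nearest_vertex \<phi>)\<bar> < \<beta>"
    using nearest_offset_bounds[of \<phi>] generic(1) unfolding nearest_offset_def by auto
  have bottom: "\<bar>offset (\<phi>+pi) (nearest_vertex (\<phi>+pi))\<bar> < \<beta>"
    using nearest_offset_bounds[of "\<phi>+pi"] generic(2) unfolding nearest_offset_def by auto
  note slice = slice_measure[OF top bottom s]
  have Q: "slice s \<phi> \<in> sets lborel" by (rule slice(1))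
  have "half_slice_measure s (\<phi> + pi) = emeasure lborel (uminus -` (slice s \<phi> \<inter> {..0}))"
    unfolding half_slice_measure_def slice_opposite by (intro arg_cong[where f="emeasure lborel"]) auto
  also have "\<dots> = emeasure lborel (slice s \<phi> \<inter> {..0})"
    using Q by (intro emeasure_lborel_reflect) auto
  also have "\<dots> = emeasure lborel (slice s \<phi> \<inter> {..<0})"
  proof -
    have "{0::real} \<in> null_sets lborel" by (rule countable_imp_null_set_lborel) simp
    then have "slice s \<phi> \<inter> {0} \<in> null_sets lborel"
      by (rule null_sets_subset) (use Q in auto)
    moreover have "slice s \<phi> \<inter> {..0} = (slice s \<phi> \<inter> {..<0}) \<union> (slice s \<phi> \<inter> {0})" by auto
    ultimately show ?thesis using Q by (simp add: emeasure_Un_null_set)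
  qed
  finally have "half_slice_measure s \<phi> + half_slice_measure s (\<phi> + pi)
      = emeasure lborel (slice s \<phi> \<inter> {0..}) + emeasure lborel (slice s \<phi> \<inter> {..<0})"
    by (simp add: half_slice_measure_def)
  also have "\<dots> = emeasure lborel (slice s \<phi>)"
    using Q by (subst plus_emeasure) (auto intro!: arg_cong[where f="emeasure lborel"])
  finally show ?thesis using slice(2) by (simp add: cap_width_eq)
qed

text \<open>Tonelli: the measure of the set of lines with \<open>p \<ge> 0\<close>, \<open>0 \<le> \<phi> < 2\<pi>\<close> and chord length at
  most s is the integral of the half-slice measures.\<close>
lemma emeasure_short_chords:
  assumes "0 \<le> s"
  shows "emeasure lborel {(p::real, \<phi>::real). 0 \<le> p \<and> 0 \<le> \<phi> \<and> \<phi> < 2 * pi \<and>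
        gline p \<phi> \<inter> K \<noteq> {} \<and> chord_length K p \<phi> \<le> s}
      = (\<integral>\<^sup>+\<phi>. indicator {0..<2*pi} \<phi> * half_slice_measure s \<phi> \<partial>lborel)"
proof -
  define S where "S = {(p::real, \<phi>::real). 0 \<le> p \<and> 0 \<le> \<phi> \<and> \<phi> < 2 * pi \<and>
        gline p \<phi> \<inter> K \<noteq> {} \<and> chord_length K p \<phi> \<le> s}"
  have S_eq: "S = short_lines K s \<inter> ({0..} \<times> {0..<2*pi})" by (auto simp: S_def short_lines_def)
  have S: "S \<in> sets (lborel \<Otimes>\<^sub>M lborel)"
    unfolding S_eq lborel_prod sets_lborel using short_lines_borel[OF compact_K assms]
    by (rule sets.Int) (auto intro!: borel_Times)
  have "emeasure lborel S = (\<integral>\<^sup>+\<phi>. emeasure lborel ((\<lambda>p. (p, \<phi>)) -` S) \<partial>lborel)"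
    using lborel_pair.emeasure_pair_measure_alt2[OF S] by (simp add: lborel_prod)
  also have "\<dots> = (\<integral>\<^sup>+\<phi>. indicator {0..<2*pi} \<phi> * half_slice_measure s \<phi> \<partial>lborel)"
    by (intro nn_integral_cong)
      (auto simp: S_eq vimage_Int short_lines_Pair half_slice_measure_def indicator_def Int_commute)
  finally show ?thesis unfolding S_def .
qed

text \<open>Averaging over \<open>\<phi>\<close> and \<open>\<phi> + \<pi>\<close> turns the half slices into full cap widths.\<close>
lemma integral_half_slice_measure:
  assumes s: "0 \<le> s" "admissible s"
  shows "(\<integral>\<^sup>+\<phi>. indicator {0..<2*pi} \<phi> * half_slice_measure s \<phi> \<partial>lborel)
    = (\<integral>\<^sup>+\<phi>. indicator {0..<2*pi} \<phi> * ennreal (cap_width s \<phi>) \<partial>lborel)"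
proof (rule nn_integral_periodic_symmetrize)
  show "half_slice_measure s \<in> borel_measurable borel" by (rule half_slice_measure_measurable[OF s(1)])
  show "AE \<phi> in lborel. half_slice_measure s \<phi> + half_slice_measure s (\<phi> + pi)
      = ennreal (cap_width s \<phi>) + ennreal (cap_width s (\<phi> + pi))"
    using AE_generic_direction
    by eventually_elim (simp add: half_slice_measure_opposite[OF s] cap_width_nonneg[OF s(1)] ennreal_plus)
qed (use half_slice_measure_2pi cap_width_2pi pi_gt_zero in auto)

lemma chord_dist_eq:
  assumes "0 \<le> s" "admissible s"
  shows "chord_dist n r s = real n * vertex_integral s / reg_perimeter n r"
proof -
  have "emeasure lborel {(p::real, \<phi>::real). 0 \<le> p \<and> 0 \<le> \<phi> \<and> \<phi> < 2 * pi \<and>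
        gline p \<phi> \<inter> K \<noteq> {} \<and> chord_length K p \<phi> \<le> s} = ennreal (real n * vertex_integral s)"
    using emeasure_short_chords[OF assms(1)] integral_half_slice_measure[OF assms]
      integral_cap_width[OF assms(1)] by simp
  then show ?thesis
    unfolding chord_dist_def measure_def using vertex_integral_nonneg[OF assms(1)] by simp
qed

text \<open>The hypotheses of the theorem make s admissible: for the triangle
  \<open>2r cos\<^sup>2(\<pi>/6) = 2r sin \<beta> sin 2\<beta>\<close>, and for \<open>n \<ge> 4\<close> the angle \<open>2\<beta> \<le> \<pi>/2\<close> makes
  \<open>sin \<theta> < sin 2\<beta>\<close> on \<open>(0, 2\<beta>)\<close>.\<close>
lemma admissible_triangle:
  assumes "n = 3" "0 \<le> s" "s \<le> 2 * r * (cos (pi / (2 * real n)))^2"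
  shows "admissible s"
proof -
  have \<beta>3: "\<beta> = pi / 3" unfolding \<beta>_def using assms(1) by simp
  have ss: "sin \<beta> * sin (2*\<beta>) = 3/4"
  proof -
    have "sin \<beta> = sqrt 3 / 2" "sin (2*\<beta>) = sqrt 3 / 2" unfolding \<beta>3 using sin_60 sin_120 by simp_all
    then have "sin \<beta> * sin (2*\<beta>) = (sqrt 3 * sqrt 3) / 4" by (simp only:)
    then show ?thesis by simp
  qed
  have "(cos (pi / (2 * real n)))^2 = 3/4" using assms(1) by (simp add: cos_30 power_divide)
  then have "s \<le> 2 * r * (3/4)" using assms(3) by (simp only:)
  then have bound: "s \<le> 2 * r * sin \<beta> * sin (2*\<beta>)" by (simp add: ss mult.assoc)
  have "cap_fits s" unfolding cap_fits_def
  proof (intro allI impI)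
    fix \<theta> :: real
    have "s * sin \<theta> \<le> s" using assms(2) by (simp add: mult_left_le)
    then show "s * sin \<theta> \<le> 2 * r * sin \<beta> * sin (2*\<beta>)" using bound by linarith
  qed
  then show ?thesis unfolding admissible_def using assms(1) by blast
qed

lemma admissible_ge4:
  assumes "4 \<le> n" "0 \<le> s" "s \<le> 2 * r * sin (pi / real n)"
  shows "admissible s"
proof -
  have \<beta>4: "\<beta> \<le> pi / 4" using assms(1) n_pos unfolding \<beta>_def by (simp add: field_simps)
  have "cap_fits_strictly s" unfolding cap_fits_strictly_def
  proof (intro allI impI)
    fix \<theta> :: real assume \<theta>: "0 < \<theta> \<and> \<theta> < 2*\<beta>"
    have "0 < sin \<theta>" using \<theta> by (intro sin_pos_below_2\<beta>) auto
    then have "s * sin \<theta> \<le> (2 * r * sin \<beta>) * sin \<theta>" using assms(3) by (simp add: \<beta>_def)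
    also have "\<dots> < (2 * r * sin \<beta>) * sin (2*\<beta>)"
      using \<theta> \<beta>4 r_pos sin_\<beta>_pos by (intro mult_strict_left_mono) (auto simp: sin_mono_less_eq)
    finally show "s * sin \<theta> < 2 * r * sin \<beta> * sin (2*\<beta>)" .
  qed
  then show ?thesis unfolding admissible_def using assms(1) by blast
qed

lemma distribution_formula:
  "real n * vertex_integral s / reg_perimeter n r =
    ((1 - (pi / real n) * cot (pi / real n)) / sin (pi / real n)
      + (pi / real n) / cos (pi / real n)) * s / (4 * r)"
proof -
  have pn: "pi / real n = \<beta>" by (simp add: \<beta>_def)
  show ?thesis
    unfolding pn reg_perimeter_def vertex_integral_def cot_def sin_double cos_double
    using sin_\<beta>_pos cos_\<beta>_pos n_pos r_pos by (simp add: field_simps power2_eq_square)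
qed

end

theorem mainTheorem2:
  fixes n :: nat and r s :: real
  assumes "n \<ge> 3" and "r > 0" and "0 \<le> s"
    and "(n = 3 \<and> s \<le> 2 * r * (cos (pi / (2 * real n)))^2) \<or>
         (n \<ge> 4 \<and> s \<le> 2 * r * sin (pi / real n))"
  shows "chord_dist n r s =
    ((1 - (pi / real n) * cot (pi / real n)) / sin (pi / real n)
      + (pi / real n) / cos (pi / real n)) * s / (4 * r)"
proof -
  interpret regular_polygon n r using assms(1,2) by unfold_locales
  have "admissible s" using assms(3,4) admissible_triangle admissible_ge4 by blast
  then show ?thesis using chord_dist_eq[OF assms(3)] distribution_formula by simp
qed

end
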